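(* Let $(x_1,\dots,x_{r+1})$ be a nonbacktracking walk in an undirected graph without loops. Then for every repeating edge block, with first node at position $a$: (i) $x_a=x_j$ for some $j<a$ (equivalently, in the notation of Lemma 4, the list $\mathbf R_2$ of repeating edge blocks whose first-node vertex has not appeared earlier in the walk is empty); and (ii) either $x_a=x_1$ or $x_a=x_j$ for some position $j$ in the new edge interior.
   Context: A walk of length $r$ is a sequence $(x_1,\dots,x_{r+1})$ of vertices with each $\{x_i,x_{i+1}\}$ an edge; it is nonbacktracking if $x_i\neq x_{i+2}$ for all $i\in\{1,\dots,r-1\}$. The $i$-th edge $\{x_i,x_{i+1}\}$ is a new edge if it differs from $\{x_j,x_{j+1}\}$ for all $j<i$, and a repeating edge otherwise. A repeating edge block is a maximal run of consecutive repeating edges, say edges $a,\dots,b-1$ ($a<b$); its first node is position $a$ and its last node is position $b$. The new edge interior is the list of positions $m$ with $2\le m\le r$ such that both the $(m-1)$-th and $m$-th edges are new. *)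

theory Defs
  imports Main
begin

text \<open>A walk of length r is given by a function x on positions 1..r+1 (1-based).
  The i-th edge (1 <= i <= r) is the unordered pair {x i, x (i+1)}.\<close>

definition walk_edge :: "(nat \<Rightarrow> 'a) \<Rightarrow> nat \<Rightarrow> 'a set" where
  "walk_edge x i = {x i, x (Suc i)}"

definition is_walk :: "('a \<Rightarrow> 'a \<Rightarrow> bool) \<Rightarrow> (nat \<Rightarrow> 'a) \<Rightarrow> nat \<Rightarrow> bool" where
  "is_walk E x r \<longleftrightarrow> (\<forall>i. 1 \<le> i \<and> i \<le> r \<longrightarrow> E (x i) (x (Suc i)))"

definition nonbacktracking :: "(nat \<Rightarrow> 'a) \<Rightarrow> nat \<Rightarrow> bool" where
  "nonbacktracking x r \<longleftrightarrow> (\<forall>i. 1 \<le> i \<and> i \<le> r - 1 \<longrightarrow> x i \<noteq> x (i + 2))"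

definition new_edge :: "(nat \<Rightarrow> 'a) \<Rightarrow> nat \<Rightarrow> bool" where
  "new_edge x i \<longleftrightarrow> (\<forall>j. 1 \<le> j \<and> j < i \<longrightarrow> walk_edge x j \<noteq> walk_edge x i)"

definition repeating_edge :: "(nat \<Rightarrow> 'a) \<Rightarrow> nat \<Rightarrow> bool" where
  "repeating_edge x i \<longleftrightarrow> \<not> new_edge x i"

text \<open>Repeating edge block: maximal run of repeating edges a, ..., b-1 with a < b;
  its first node is position a and its last node is position b.\<close>
definition repeating_block :: "(nat \<Rightarrow> 'a) \<Rightarrow> nat \<Rightarrow> nat \<Rightarrow> nat \<Rightarrow> bool" where
  "repeating_block x r a b \<longleftrightarrow>
     1 \<le> a \<and> a < b \<and> b \<le> r + 1 \<and>
     (\<forall>i. a \<le> i \<and> i < b \<longrightarrow> repeating_edge x i) \<and>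
     (a = 1 \<or> new_edge x (a - 1)) \<and>
     (b = r + 1 \<or> new_edge x b)"

definition new_edge_interior :: "(nat \<Rightarrow> 'a) \<Rightarrow> nat \<Rightarrow> nat set" where
  "new_edge_interior x r = {m. 2 \<le> m \<and> m \<le> r \<and> new_edge x (m - 1) \<and> new_edge x m}"

end

theory Submission
  imports Defs
begin

text \<open>A repeated edge coincides with an earlier edge, so its first endpoint was visited
  before, unless the earlier edge is its immediate predecessor traversed in reverse; that is a
  backtracking step (or a loop). Conversely, the first visit of a vertex at a position k \<ge> 2 is
  entered and left by new edges: all earlier edges avoid the vertex, and the edge leaving it
  cannot repeat the edge entering it without backtracking. Hence the first visit of the first
  node of a repeating block is either the start of the walk or lies in the new edge interior.\<close>

lemma loopless_walk_step_neq:
  assumes "\<And>u. \<not> E u u" and "is_walk E x r" and "1 \<le> i" and "i \<le> r"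
  shows "x i \<noteq> x (Suc i)"
  using assms unfolding is_walk_def by metis

lemma nonbacktrackingD:
  assumes "nonbacktracking x r" and "1 \<le> i" and "Suc i \<le> r"
  shows "x i \<noteq> x (i + 2)"
  using assms unfolding nonbacktracking_def by auto

lemma repeating_edge_start_visited_before:
  assumes noloop: "\<And>u. \<not> E u u" and walk: "is_walk E x r" and nb: "nonbacktracking x r"
    and "a \<le> r" and "repeating_edge x a"
  shows "\<exists>j. 1 \<le> j \<and> j < a \<and> x a = x j"
proof -
  obtain j where j: "1 \<le> j" "j < a" and "walk_edge x j = walk_edge x a"
    using \<open>repeating_edge x a\<close> unfolding repeating_edge_def new_edge_def by blast
  then have same_edge: "{x j, x (Suc j)} = {x a, x (Suc a)}"
    by (simp only: walk_edge_def)
  have "x j \<in> {x a, x (Suc a)}"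
    unfolding same_edge[symmetric] by simp
  have "x a \<in> {x j, x (Suc j)}"
    unfolding same_edge by simp
  then consider "x a = x j" | "x a = x (Suc j)" "Suc j < a" | "x a = x (Suc j)" "a = Suc j"
    using j(2) by (cases "Suc j < a") auto
  then show ?thesis
  proof cases
    case 1
    with j show ?thesis by blast
  next
    case 2
    with j show ?thesis by (intro exI[of _ "Suc j"]) simp
  next
    case 3
    have "x j \<noteq> x a"
      using loopless_walk_step_neq[OF noloop walk, of j] j \<open>a \<le> r\<close> 3 by simp
    with \<open>x j \<in> {x a, x (Suc a)}\<close> have "x j = x (j + 2)"
      using 3 by simp
    moreover have "x j \<noteq> x (j + 2)"
      using nonbacktrackingD[OF nb, of j] j \<open>a \<le> r\<close> 3 by simp
    ultimately show ?thesis by contradiction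
  qed
qed

lemma first_visit_in_new_edge_interior:
  assumes noloop: "\<And>u. \<not> E u u" and walk: "is_walk E x r" and nb: "nonbacktracking x r"
    and "2 \<le> k" and "k \<le> r" and first: "\<And>i. 1 \<le> i \<Longrightarrow> i < k \<Longrightarrow> x i \<noteq> x k"
  shows "k \<in> new_edge_interior x r"
proof -
  have avoids: "x k \<notin> walk_edge x i" if "1 \<le> i" "i < k - 1" for i
  proof -
    have "x i \<noteq> x k" "x (Suc i) \<noteq> x k"
      using first[of i] first[of "Suc i"] that by simp_all
    then show ?thesis by (auto simp: walk_edge_def)
  qed
  have "x k \<in> walk_edge x (k - 1)"
    using \<open>2 \<le> k\<close> by (simp add: walk_edge_def)
  then have "new_edge x (k - 1)"
    unfolding new_edge_def using avoids by blast
  moreover have "new_edge x k"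
    unfolding new_edge_def
  proof (intro allI impI)
    fix i assume i: "1 \<le> i \<and> i < k"
    show "walk_edge x i \<noteq> walk_edge x k"
    proof (cases "Suc i = k")
      case True
      have "x i \<noteq> x k" "x i \<noteq> x (i + 2)"
        using loopless_walk_step_neq[OF noloop walk, of i] nonbacktrackingD[OF nb, of i]
          i True \<open>k \<le> r\<close> by simp_all
      then have "x i \<notin> walk_edge x k"
        using True by (simp add: walk_edge_def)
      then show ?thesis by (auto simp: walk_edge_def)
    next
      case False
      then have "x k \<notin> walk_edge x i" using avoids i by force
      then show ?thesis by (auto simp: walk_edge_def)
    qed
  qed
  ultimately show ?thesis
    unfolding new_edge_interior_def using \<open>2 \<le> k\<close> \<open>k \<le> r\<close> by simp
qed

lemma visited_vertex_start_or_in_new_edge_interior: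
  assumes noloop: "\<And>u. \<not> E u u" and walk: "is_walk E x r" and nb: "nonbacktracking x r"
    and "1 \<le> k" and "k \<le> r"
  shows "x k = x 1 \<or> (\<exists>m \<in> new_edge_interior x r. x k = x m)"
  using assms(4,5)
proof (induction k rule: less_induct)
  case (less k)
  show ?case
  proof (cases "\<exists>i. 1 \<le> i \<and> i < k \<and> x i = x k")
    case True
    then obtain i where i: "1 \<le> i" "i < k" and "x i = x k" by blast
    moreover have "i \<le> r" using i less.prems by simp
    ultimately show ?thesis using less.IH[OF i(2) i(1)] by simp
  next
    case False
    then have first: "\<And>i. 1 \<le> i \<Longrightarrow> i < k \<Longrightarrow> x i \<noteq> x k" by blast
    show ?thesis
    proof (cases "k = 1")
      case False
      then have "2 \<le> k" using less.prems by simp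
      then have "k \<in> new_edge_interior x r"
        using first_visit_in_new_edge_interior[OF noloop walk nb _ _ first] less.prems(2) by blast
      then show ?thesis by auto
    next
      case True
      then show ?thesis by simp
    qed
  qed
qed

theorem lemma5:
  fixes E :: "'a \<Rightarrow> 'a \<Rightarrow> bool" and x :: "nat \<Rightarrow> 'a" and r a b :: nat
  assumes sym: "\<And>u v. E u v \<Longrightarrow> E v u"
    and noloop: "\<And>u. \<not> E u u"
    and walk: "is_walk E x r"
    and nb: "nonbacktracking x r"
    and blk: "repeating_block x r a b"
  shows "(\<exists>j. 1 \<le> j \<and> j < a \<and> x a = x j) \<and>
         (x a = x 1 \<or> (\<exists>m \<in> new_edge_interior x r. x a = x m))"
proof -
  have a: "1 \<le> a" "a \<le> r" and rep: "repeating_edge x a"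
    using blk unfolding repeating_block_def by auto
  show ?thesis
    using repeating_edge_start_visited_before[OF noloop walk nb a(2) rep]
      visited_vertex_start_or_in_new_edge_interior[OF noloop walk nb a]
    by (rule conjI)
qed

end
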